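(* Let $\alpha>1$ and $k\ge 0$ be an integer. Let $P\subset\mathbb{R}^1$ be a finite point set containing the source $s$ and let $q\in\mathbb{R}^1$ be a point with $q\notin P$. Let $\rho_{\mathrm{old}}(p)$ be the range of a point $p$ in the canonical range assignment $\rho_k(P)$ and let $\rho_{\mathrm{new}}(p)$ be the range of $p$ in $\rho_k(P\cup\{q\})$ (with the range of a point not in the set being $0$). Then $$\big|\{p\in P\cup\{q\}:\rho_{\mathrm{new}}(p)>\rho_{\mathrm{old}}(p)\}\big|\le k+3\quad\text{and}\quad \big|\{p\in P\cup\{q\}:\rho_{\mathrm{new}}(p)<\rho_{\mathrm{old}}(p)\}\big|\le k+3.$$
   Context: Setting: points in $\mathbb{R}^1$ with distance $|pq|$; a range assignment $\rho$ on a finite set $P$ containing source $s$ induces the directed graph with edge $(p,q)$ iff $|pq|\le\rho(p)$; it is feasible if this graph contains an arborescence rooted at $s$ spanning $P$; its cost is $\sum_p\rho(p)^\alpha$ with $\alpha>1$. Write $P=L\cup\{s\}\cup R$, where $L=\{\ell_1,\dots,\ell_{|L|}\}$ are the points left of $s$ and $R=\{r_1,\dots,r_{|R|}\}$ the points right of $s$, each numbered by increasing distance from $s$. $\ell_{|L|}$ and $r_{|R|}$ are extreme points. The successor of $r_i$ (non-extreme) is $r_{i+1}$, of $\ell_i$ is $\ell_{i+1}$; $s$ has successors $r_1$ and $\ell_1$; extreme points have no successor. A chain is a path in the communication graph using only edges from a point to its successor. The standard range $\rho_{\mathrm{st}}(p)$ of a non-extreme $p\neq s$ is its distance to its successor;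 of an extreme point it is $0$; $s$ has the two standard ranges $|s\ell_1|,|sr_1|$. A zero-range point is a non-extreme point with range $0$. For a broadcast tree $\mathcal{B}$ (arborescence rooted at $s$), a point of $R\cup L$ is root-crossing if it has a child on the other side of $s$; $s$ is root-crossing if it has a child in $L$ and one in $R$. Structured optimal assignment $\rho_{\mathrm{opt}}$: if all points of $P\setminus\{s\}$ lie on one side of $s$, $\rho_{\mathrm{opt}}$ gives each point its standard range (a chain from $s$ to the extreme point); otherwise $\rho_{\mathrm{opt}}$ is a minimum-cost feasible assignment whose graph contains a broadcast tree $\mathcal{B}$ with: a single root-crossing point $p^*$; a chain from $s$ to $p^*$; all points within reach of $p^*$ (i.e. at distance $\le\rho_{\mathrm{opt}}(p^* )$), except those on the chain from $s$ to $p^*$, are children of $p^*$; and, with $r_i,\ell_j$ the rightmost and leftmost points within reach of $p^*$, chains from $r_i$ to $r_{|R|}$ and from $\ell_j$ to $\ell_{|L|}$ (such an optimal assignment always exists). For each point set a fixed such $\rho_{\mathrm{opt}}$ is used. Canonical range assignment $\rho_k$: if all points of $P$ lie on one side of $s$, $\rho_k=\rho_{\mathrm{opt}}$. Otherwise let $Z$ be the set of zero-range points in $\rho_{\mathrm{opt}}(P)$; let $Z_k=Z$ if $|Z|\le k$, and otherwise let $Z_k\subseteq Z$ be the $k$ points of $Z$ with largest standard ranges (ties broken arbitrarily). Then $\rho_k(p)=\rho_{\mathrm{opt}}(p)$ for $p\in P\setminus Z$, $\rho_k(p)=0$ for $p\in Z_k$, and $\rho_k(p)=\rho_{\mathrm{st}}(p)$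 for $p\in Z\setminus Z_k$. *)

theory Defs
  imports Complex_Main
begin

definition left_pts :: "real set \<Rightarrow> real \<Rightarrow> real set" where
  "left_pts P s = {p \<in> P. p < s}"

definition right_pts :: "real set \<Rightarrow> real \<Rightarrow> real set" where
  "right_pts P s = {p \<in> P. p > s}"

definition is_extreme :: "real set \<Rightarrow> real \<Rightarrow> real \<Rightarrow> bool" where
  "is_extreme P s p \<longleftrightarrow>
     (p \<in> right_pts P s \<and> p = Max (right_pts P s)) \<or>
     (p \<in> left_pts P s \<and> p = Min (left_pts P s))"

definition succ_pt :: "real set \<Rightarrow> real \<Rightarrow> real \<Rightarrow> real" where
  "succ_pt P s p = (if p > s then Min {x \<in> P. x > p} else Max {x \<in> P. x < p})"

definition pred_pt :: "real set \<Rightarrow> real \<Rightarrow> real \<Rightarrow> real" where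
  "pred_pt P s x = (if x > s then Max {y \<in> P. y < x} else Min {y \<in> P. y > x})"

definition std_range :: "real set \<Rightarrow> real \<Rightarrow> real \<Rightarrow> real" where
  "std_range P s p =
     (if p \<in> P \<and> p \<noteq> s \<and> \<not> is_extreme P s p then \<bar>succ_pt P s p - p\<bar> else 0)"

definition range_assignment :: "real set \<Rightarrow> (real \<Rightarrow> real) \<Rightarrow> bool" where
  "range_assignment P \<rho> \<longleftrightarrow> (\<forall>p\<in>P. \<rho> p \<ge> 0) \<and> (\<forall>p. p \<notin> P \<longrightarrow> \<rho> p = 0)"

definition cost :: "real \<Rightarrow> real set \<Rightarrow> (real \<Rightarrow> real) \<Rightarrow> real" where
  "cost \<alpha> P \<rho> = (\<Sum>p\<in>P. \<rho> p powr \<alpha>)"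

text \<open>Broadcast tree (arborescence rooted at s spanning P) in the communication graph of \<rho>,
  given by a parent function: every p \<noteq> s in P has a parent in P which reaches p, and
  iterating the parent function from any point of P reaches s.\<close>
definition is_btree :: "real set \<Rightarrow> real \<Rightarrow> (real \<Rightarrow> real) \<Rightarrow> (real \<Rightarrow> real) \<Rightarrow> bool" where
  "is_btree P s \<rho> par \<longleftrightarrow>
     (\<forall>x \<in> P - {s}. par x \<in> P \<and> par x \<noteq> x \<and> \<bar>x - par x\<bar> \<le> \<rho> (par x)) \<and>
     (\<forall>x \<in> P. \<exists>n. (par ^^ n) x = s)"

definition feasible :: "real set \<Rightarrow> real \<Rightarrow> (real \<Rightarrow> real) \<Rightarrow> bool" where
  "feasible P s \<rho> \<longleftrightarrow> (\<exists>par. is_btree P s \<rho> par)"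

definition min_cost_feasible :: "real \<Rightarrow> real set \<Rightarrow> real \<Rightarrow> (real \<Rightarrow> real) \<Rightarrow> bool" where
  "min_cost_feasible \<alpha> P s \<rho> \<longleftrightarrow>
     range_assignment P \<rho> \<and> feasible P s \<rho> \<and>
     (\<forall>\<rho>'. range_assignment P \<rho>' \<and> feasible P s \<rho>' \<longrightarrow> cost \<alpha> P \<rho> \<le> cost \<alpha> P \<rho>')"

definition one_sided :: "real set \<Rightarrow> real \<Rightarrow> bool" where
  "one_sided P s \<longleftrightarrow> left_pts P s = {} \<or> right_pts P s = {}"

definition std_assignment :: "real set \<Rightarrow> real \<Rightarrow> real \<Rightarrow> real" where
  "std_assignment P s p =
     (if p = s \<and> s \<in> P then
        (if right_pts P s \<noteq> {} then Min (right_pts P s) - s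
         else if left_pts P s \<noteq> {} then s - Max (left_pts P s) else 0)
      else std_range P s p)"

definition root_crossing :: "real set \<Rightarrow> real \<Rightarrow> (real \<Rightarrow> real) \<Rightarrow> real \<Rightarrow> bool" where
  "root_crossing P s par p \<longleftrightarrow>
     (p = s \<and> (\<exists>c \<in> left_pts P s. par c = s) \<and> (\<exists>c \<in> right_pts P s. par c = s)) \<or>
     (p \<in> right_pts P s \<and> (\<exists>c \<in> left_pts P s. par c = p)) \<or>
     (p \<in> left_pts P s \<and> (\<exists>c \<in> right_pts P s. par c = p))"

definition on_chain :: "real \<Rightarrow> real \<Rightarrow> real \<Rightarrow> bool" where
  "on_chain s pstar x \<longleftrightarrow> min s pstar \<le> x \<and> x \<le> max s pstar"

definition structured_opt :: "real \<Rightarrow> real set \<Rightarrow> real \<Rightarrow> (real \<Rightarrow> real) \<Rightarrow> bool" where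
  "structured_opt \<alpha> P s \<rho> \<longleftrightarrow>
     (if one_sided P s then \<rho> = std_assignment P s
      else min_cost_feasible \<alpha> P s \<rho> \<and>
        (\<exists>par pstar. is_btree P s \<rho> par \<and> pstar \<in> P \<and>
          (\<forall>p \<in> P. root_crossing P s par p \<longleftrightarrow> p = pstar) \<and>
          (\<forall>x \<in> P. x \<noteq> s \<and> on_chain s pstar x \<longrightarrow> par x = pred_pt P s x) \<and>
          (\<forall>x \<in> P. x \<noteq> pstar \<and> \<bar>x - pstar\<bar> \<le> \<rho> pstar \<and> \<not> on_chain s pstar x
                      \<longrightarrow> par x = pstar) \<and>
          (\<forall>x \<in> P. x > Max {y \<in> P. \<bar>y - pstar\<bar> \<le> \<rho> pstar} \<longrightarrow> par x = pred_pt P s x) \<and>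
          (\<forall>x \<in> P. x < Min {y \<in> P. \<bar>y - pstar\<bar> \<le> \<rho> pstar} \<longrightarrow> par x = pred_pt P s x)))"

definition zero_pts :: "real set \<Rightarrow> real \<Rightarrow> (real \<Rightarrow> real) \<Rightarrow> real set" where
  "zero_pts P s \<rho> = {p \<in> P. p \<noteq> s \<and> \<not> is_extreme P s p \<and> \<rho> p = 0}"

definition valid_Zk :: "nat \<Rightarrow> real set \<Rightarrow> real \<Rightarrow> real set \<Rightarrow> real set \<Rightarrow> bool" where
  "valid_Zk k P s Z Zk \<longleftrightarrow> Zk \<subseteq> Z \<and>
     (card Z \<le> k \<longrightarrow> Zk = Z) \<and>
     (card Z > k \<longrightarrow> card Zk = k \<and>
        (\<forall>a \<in> Zk. \<forall>b \<in> Z - Zk. std_range P s b \<le> std_range P s a))"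

text \<open>\<rho> is a canonical range assignment rho_k(P), for some admissible choice of the
  structured optimal assignment and of Z_k.\<close>
definition canonical :: "real \<Rightarrow> nat \<Rightarrow> real set \<Rightarrow> real \<Rightarrow> (real \<Rightarrow> real) \<Rightarrow> bool" where
  "canonical \<alpha> k P s \<rho> \<longleftrightarrow>
     (\<exists>\<rho>opt. structured_opt \<alpha> P s \<rho>opt \<and>
       (if one_sided P s then \<rho> = \<rho>opt
        else (\<exists>Zk. valid_Zk k P s (zero_pts P s \<rho>opt) Zk \<and>
               \<rho> = (\<lambda>p. if p \<in> zero_pts P s \<rho>opt - Zk then std_range P s p else \<rho>opt p))))"

end

theory Submission
  imports Defs
begin

(* Away from s, a canonical assignment rho_k(P) is at least the standard range outside Z_k and
   at most the standard range outside the root-crossing point p*: by minimality of rho_opt,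
   a point other than p* has at most its successor as a child, so its optimal range is 0 or
   standard. Inserting q raises the standard range of at most one point of P \<union> {q} (the old
   extreme point beyond which q lies, or q itself) and lowers that of at most one point (the
   predecessor of q). Hence a point whose range grows lies in Z_k(P), is s or p*(P \<union> {q}), or
   has a growing standard range, and symmetrically for shrinking ranges: k + 3 in both cases. *)

definition beyond :: "real \<Rightarrow> real \<Rightarrow> real \<Rightarrow> bool" where
  "beyond s x z \<longleftrightarrow> s < x \<and> x < z \<or> z < x \<and> x < s"

(* The successor of x, characterised without Min/Max so that both sides of s are treated alike. *)
definition is_succ :: "real set \<Rightarrow> real \<Rightarrow> real \<Rightarrow> real \<Rightarrow> bool" where
  "is_succ P s x y \<longleftrightarrow> y \<in> P \<and> beyond s x y \<and> (\<forall>z\<in>P. beyond s x z \<longrightarrow> \<bar>y - x\<bar> \<le> \<bar>z - x\<bar>)"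

lemma beyond_trans: "beyond s x y \<Longrightarrow> beyond s y z \<Longrightarrow> beyond s x z"
  unfolding beyond_def by linarith

lemma beyond_same_side:
  "beyond s x q \<Longrightarrow> beyond s y q \<Longrightarrow> x = y \<or> beyond s x y \<or> beyond s y x"
  unfolding beyond_def by linarith

lemma is_succ_unique: "is_succ P s x y \<Longrightarrow> is_succ P s x y' \<Longrightarrow> y = y'"
  unfolding is_succ_def beyond_def by force

lemma std_range_nonneg: "0 \<le> std_range P s x"
  unfolding std_range_def by simp

lemma std_range_outside: "x \<notin> P \<Longrightarrow> std_range P s x = 0"
  unfolding std_range_def by simp

lemma is_extreme_iff_no_beyond:
  assumes "finite P" "x \<in> P" "x \<noteq> s"
  shows "is_extreme P s x \<longleftrightarrow> (\<forall>z\<in>P. \<not> beyond s x z)"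
proof (cases "s < x")
  case True
  have "finite (right_pts P s)" "right_pts P s \<noteq> {}"
    using assms True by (auto simp: right_pts_def)
  then have "is_extreme P s x \<longleftrightarrow> x \<in> right_pts P s \<and> (\<forall>z\<in>right_pts P s. z \<le> x)"
    using True Max_eq_iff[of "right_pts P s" x] by (auto simp: is_extreme_def left_pts_def)
  then show ?thesis
    using True assms by (auto simp: right_pts_def beyond_def not_less)
next
  case False
  then have "x < s" using assms by simp
  have "finite (left_pts P s)" "left_pts P s \<noteq> {}"
    using assms \<open>x < s\<close> by (auto simp: left_pts_def)
  then have "is_extreme P s x \<longleftrightarrow> x \<in> left_pts P s \<and> (\<forall>z\<in>left_pts P s. x \<le> z)"
    using \<open>x < s\<close> Min_eq_iff[of "left_pts P s" x] by (auto simp: is_extreme_def right_pts_def)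
  then show ?thesis
    using \<open>x < s\<close> assms by (auto simp: left_pts_def beyond_def not_less)
qed

lemma succ_pt_is_succ:
  assumes "finite P" "z \<in> P" "beyond s x z"
  shows "is_succ P s x (succ_pt P s x)"
proof (cases "s < x")
  case True
  let ?A = "{w \<in> P. x < w}"
  have "finite ?A" "z \<in> ?A" using assms True by (auto simp: beyond_def)
  then have "Min ?A \<in> ?A" "\<forall>w\<in>?A. Min ?A \<le> w" using Min_in by auto
  then show ?thesis using True by (auto simp: is_succ_def succ_pt_def beyond_def)
next
  case False
  let ?A = "{w \<in> P. w < x}"
  have "finite ?A" "z \<in> ?A" using assms False by (auto simp: beyond_def)
  then have "Max ?A \<in> ?A" "\<forall>w\<in>?A. w \<le> Max ?A" using Max_in by auto
  then show ?thesis using False assms(3) by (auto simp: is_succ_def succ_pt_def beyond_def)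
qed

lemma std_range_is_succ:
  assumes "finite P" "x \<in> P" "x \<noteq> s" "is_succ P s x y"
  shows "std_range P s x = \<bar>y - x\<bar>"
proof -
  have "y \<in> P" "beyond s x y" using assms(4) by (auto simp: is_succ_def)
  then have "succ_pt P s x = y"
    using is_succ_unique[OF succ_pt_is_succ assms(4)] assms(1) by blast
  moreover have "\<not> is_extreme P s x"
    using is_extreme_iff_no_beyond[OF assms(1-3)] \<open>y \<in> P\<close> \<open>beyond s x y\<close> by blast
  ultimately show ?thesis using assms by (simp add: std_range_def)
qed

lemma std_range_cases:
  assumes "finite P" "x \<in> P" "x \<noteq> s"
  obtains y where "is_succ P s x y" "std_range P s x = \<bar>y - x\<bar>"
    | "\<forall>z\<in>P. \<not> beyond s x z" "std_range P s x = 0"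
proof (cases "\<exists>z\<in>P. beyond s x z")
  case True
  then obtain z where "z \<in> P" "beyond s x z" by blast
  then have "is_succ P s x (succ_pt P s x)" using succ_pt_is_succ assms(1) by blast
  then show ?thesis using that(1) std_range_is_succ[OF assms] by blast
next
  case False
  then have "is_extreme P s x" using is_extreme_iff_no_beyond[OF assms] by blast
  then show ?thesis using that(2) False by (simp add: std_range_def)
qed

lemma std_range_eq_0_if_no_beyond:
  assumes "finite P" "x \<in> P" "x \<noteq> s" "\<forall>z\<in>P. \<not> beyond s x z"
  shows "std_range P s x = 0"
proof (cases rule: std_range_cases[OF assms(1-3)])
  case (1 y)
  then show ?thesis using assms(4) unfolding is_succ_def by blast
qed

lemma std_range_le_dist:
  assumes "finite P" "x \<in> P" "x \<noteq> s" "z \<in> P" "beyond s x z"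
  shows "std_range P s x \<le> \<bar>z - x\<bar>"
  using assms by (cases rule: std_range_cases[OF assms(1-3)]) (auto simp: is_succ_def)

lemma pred_pt_eq_iff_is_succ:
  assumes "finite P" "s \<in> P" "x \<in> P" "x \<noteq> s" "y \<in> P" "y \<noteq> s"
  shows "pred_pt P s y = x \<longleftrightarrow> is_succ P s x y"
proof (cases "s < y")
  case True
  let ?B = "{z \<in> P. z < y}"
  have "finite ?B" "?B \<noteq> {}" "s \<in> ?B" using assms True by auto
  then have "pred_pt P s y = x \<longleftrightarrow> x \<in> ?B \<and> (\<forall>z\<in>?B. z \<le> x)"
    using True Max_eq_iff[of ?B x] by (simp add: pred_pt_def)
  also have "\<dots> \<longleftrightarrow> is_succ P s x y"
    using assms \<open>s \<in> ?B\<close> unfolding is_succ_def beyond_def by (smt (verit) mem_Collect_eq)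
  finally show ?thesis .
next
  case False
  then have "y < s" using assms by simp
  let ?B = "{z \<in> P. y < z}"
  have "finite ?B" "?B \<noteq> {}" "s \<in> ?B" using assms \<open>y < s\<close> by auto
  then have "pred_pt P s y = x \<longleftrightarrow> x \<in> ?B \<and> (\<forall>z\<in>?B. x \<le> z)"
    using False Min_eq_iff[of ?B x] by (simp add: pred_pt_def)
  also have "\<dots> \<longleftrightarrow> is_succ P s x y"
    using assms \<open>s \<in> ?B\<close> unfolding is_succ_def beyond_def by (smt (verit) mem_Collect_eq)
  finally show ?thesis .
qed

lemma std_range_insert_increase:
  assumes "finite P" "x \<in> P" "x \<noteq> s"
    and "std_range P s x < std_range (insert q P) s x"
  shows "beyond s x q" "\<forall>z\<in>P. \<not> beyond s x z"
proof -
  have fin': "finite (insert q P)" and x': "x \<in> insert q P" using assms by auto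
  show no_beyond: "\<forall>z\<in>P. \<not> beyond s x z"
  proof (cases rule: std_range_cases[OF assms(1-3)])
    case (1 y)
    then have "y \<in> insert q P" "beyond s x y" by (auto simp: is_succ_def)
    then have "std_range (insert q P) s x \<le> \<bar>y - x\<bar>" by (rule std_range_le_dist[OF fin' x' assms(3)])
    then show ?thesis using 1 assms(4) by simp
  qed
  show "beyond s x q"
  proof (cases rule: std_range_cases[OF fin' x' assms(3)])
    case (1 y)
    then have "y \<in> insert q P" "beyond s x y" by (auto simp: is_succ_def)
    then show ?thesis using no_beyond by auto
  next
    case 2
    then show ?thesis using assms(4) std_range_nonneg[of P s x] by simp
  qed
qed

lemma std_range_insert_decrease:
  assumes "finite P" "x \<in> P" "x \<noteq> s"
    and "std_range (insert q P) s x < std_range P s x"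
  shows "beyond s x q" "\<forall>z\<in>P. beyond s x z \<longrightarrow> \<bar>q - x\<bar> < \<bar>z - x\<bar>"
proof -
  have fin': "finite (insert q P)" and x': "x \<in> insert q P" using assms by auto
  have le_dist: "std_range P s x \<le> \<bar>z - x\<bar>" if "z \<in> P" "beyond s x z" for z
    using std_range_le_dist[OF assms(1-3) that] .
  obtain y where y: "y \<in> insert q P" "beyond s x y" "std_range (insert q P) s x = \<bar>y - x\<bar>"
  proof (cases rule: std_range_cases[OF fin' x' assms(3)])
    case (1 y)
    then show ?thesis using that by (auto simp: is_succ_def)
  next
    case 2
    then have "std_range P s x = 0"
      using std_range_cases[OF assms(1-3)] by (metis insertCI is_succ_def)
    then show ?thesis using 2 assms(4) by simp
  qed
  have "y = q" using y le_dist assms(4) by force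
  then show "beyond s x q" "\<forall>z\<in>P. beyond s x z \<longrightarrow> \<bar>q - x\<bar> < \<bar>z - x\<bar>"
    using y le_dist assms(4) by force+
qed

lemma card_std_range_increase_le_1:
  assumes "finite P" "s \<in> P" "q \<notin> P"
  shows "card {x \<in> insert q P. std_range P s x < std_range (insert q P) s x} \<le> 1"
proof -
  let ?I = "{x \<in> insert q P. std_range P s x < std_range (insert q P) s x}"
  have fin': "finite (insert q P)" using assms(1) by simp
  have increase: "beyond s x q" "\<forall>z\<in>P. \<not> beyond s x z" if "x \<in> ?I" "x \<in> P" for x
  proof -
    have "x \<noteq> s" using that(1) by (auto simp: std_range_def)
    then show "beyond s x q" "\<forall>z\<in>P. \<not> beyond s x z"
      using std_range_insert_increase[OF assms(1) \<open>x \<in> P\<close>] that(1) by auto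
  qed
  have in_P: "y \<in> P" if "x \<in> ?I" "x \<in> P" "y \<in> ?I" for x y
  proof (rule ccontr)
    assume "y \<notin> P"
    then have "y = q" using that(3) by blast
    have "\<not> beyond s q z" if "z \<in> insert q P" for z
      using that increase[OF \<open>x \<in> ?I\<close> \<open>x \<in> P\<close>] beyond_trans by (auto simp: beyond_def)
    then have "std_range (insert q P) s q = 0"
      using assms by (intro std_range_eq_0_if_no_beyond[OF fin']) auto
    then show False using that(3) \<open>y = q\<close> std_range_outside[OF assms(3)] by simp
  qed
  have "x = y" if "x \<in> ?I" "y \<in> ?I" "x \<in> P" for x y
  proof -
    have "y \<in> P" using in_P that by blast
    then show ?thesis
      using beyond_same_side[OF increase(1)[OF that(1,3)] increase(1)[OF that(2) \<open>y \<in> P\<close>]]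
        increase(2)[OF that(1,3)] increase(2)[OF that(2) \<open>y \<in> P\<close>] that(3) by blast
  qed
  then have "\<forall>x\<in>?I. \<forall>y\<in>?I. x = y" by blast
  then show ?thesis using fin' by (simp add: card_le_Suc0_iff_eq)
qed

lemma card_std_range_decrease_le_1:
  assumes "finite P" "s \<in> P" "q \<notin> P"
  shows "card {x \<in> insert q P. std_range (insert q P) s x < std_range P s x} \<le> 1"
proof -
  let ?D = "{x \<in> insert q P. std_range (insert q P) s x < std_range P s x}"
  have decrease: "x \<in> P \<and> beyond s x q \<and> (\<forall>z\<in>P. beyond s x z \<longrightarrow> \<bar>q - x\<bar> < \<bar>z - x\<bar>)"
    if "x \<in> ?D" for x
  proof -
    have "x \<in> P"
      using that std_range_nonneg[of "insert q P" s x] std_range_outside[of x P s] by force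
    moreover have "x \<noteq> s" using that by (auto simp: std_range_def)
    ultimately show ?thesis using std_range_insert_decrease[OF assms(1)] that by blast
  qed
  have "x = y" if "x \<in> ?D" "y \<in> ?D" for x y
  proof (rule ccontr)
    assume "x \<noteq> y"
    with decrease[OF that(1)] decrease[OF that(2)] show False
      unfolding beyond_def by (smt (verit))
  qed
  then have "\<forall>x\<in>?D. \<forall>y\<in>?D. x = y" by blast
  then show ?thesis using assms(1) by (simp add: card_le_Suc0_iff_eq)
qed

lemma min_cost_range_le:
  assumes "0 < \<alpha>" "finite P" "min_cost_feasible \<alpha> P s \<rho>" "is_btree P s \<rho> par" "x \<in> P" "0 \<le> v"
    and children: "\<forall>y\<in>P - {s}. par y = x \<longrightarrow> \<bar>y - x\<bar> \<le> v"
  shows "\<rho> x \<le> v"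
proof (rule ccontr)
  assume "\<not> \<rho> x \<le> v"
  then have less: "v < \<rho> x" by simp
  define \<rho>' where "\<rho>' = \<rho>(x := v)"
  have "range_assignment P \<rho>'"
    using assms(3,5,6) unfolding min_cost_feasible_def range_assignment_def \<rho>'_def by auto
  moreover have "is_btree P s \<rho>' par"
    using assms(4) children unfolding is_btree_def \<rho>'_def by auto
  ultimately have "cost \<alpha> P \<rho> \<le> cost \<alpha> P \<rho>'"
    using assms(3) unfolding min_cost_feasible_def feasible_def by blast
  moreover have "cost \<alpha> P \<rho> = \<rho> x powr \<alpha> + (\<Sum>p\<in>P - {x}. \<rho> p powr \<alpha>)"
    unfolding cost_def using assms(2,5) by (simp add: sum.remove)
  moreover have "cost \<alpha> P \<rho>' = v powr \<alpha> + (\<Sum>p\<in>P - {x}. \<rho> p powr \<alpha>)"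
    unfolding cost_def \<rho>'_def using assms(2,5) by (simp add: sum.remove)
  moreover have "v powr \<alpha> < \<rho> x powr \<alpha>"
    using powr_less_mono2[OF assms(1) assms(6) less] .
  ultimately show False by simp
qed

lemma structured_opt_parents:
  assumes "finite P" "structured_opt \<alpha> P s \<rho>" "\<not> one_sided P s"
  obtains par p where "min_cost_feasible \<alpha> P s \<rho>" "is_btree P s \<rho> par" "p \<in> P"
    "\<forall>y\<in>P - {s}. par y = pred_pt P s y \<or> par y = p"
proof -
  let ?reach = "\<lambda>p. {y \<in> P. \<bar>y - p\<bar> \<le> \<rho> p}"
  have mcf: "min_cost_feasible \<alpha> P s \<rho>"
    using assms(2) unfolding structured_opt_def if_not_P[OF assms(3)] by (rule conjunct1)
  obtain par p where tree: "is_btree P s \<rho> par" and "p \<in> P"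
    and chain: "\<forall>x\<in>P. x \<noteq> s \<and> on_chain s p x \<longrightarrow> par x = pred_pt P s x"
    and star: "\<forall>x\<in>P. x \<noteq> p \<and> \<bar>x - p\<bar> \<le> \<rho> p \<and> \<not> on_chain s p x \<longrightarrow> par x = p"
    and right: "\<forall>x\<in>P. x > Max (?reach p) \<longrightarrow> par x = pred_pt P s x"
    and left: "\<forall>x\<in>P. x < Min (?reach p) \<longrightarrow> par x = pred_pt P s x"
    using assms(2,3) unfolding structured_opt_def if_not_P[OF assms(3)] by (elim conjE exE) blast
  have "0 \<le> \<rho> p" using mcf \<open>p \<in> P\<close> by (simp add: min_cost_feasible_def range_assignment_def)
  then have reach: "finite (?reach p)" "p \<in> ?reach p" using assms(1) \<open>p \<in> P\<close> by auto
  have "par y = pred_pt P s y \<or> par y = p" if "y \<in> P - {s}" for y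
  proof (cases "on_chain s p y")
    case True
    then show ?thesis using chain that by simp
  next
    case off_chain: False
    then have "y \<noteq> p" by (auto simp: on_chain_def)
    show ?thesis
    proof (cases "\<bar>y - p\<bar> \<le> \<rho> p")
      case True
      then show ?thesis using star that off_chain \<open>y \<noteq> p\<close> by simp
    next
      case False
      have "Max (?reach p) < y" if "p < y"
        using reach False that by (subst Max_less_iff) auto
      moreover have "y < Min (?reach p)" if "\<not> p < y"
        using reach False that by (subst Min_gr_iff) auto
      ultimately show ?thesis using left right that by auto
    qed
  qed
  then show ?thesis using that mcf tree \<open>p \<in> P\<close> by blast
qed

lemma min_cost_range_cases:
  assumes "0 < \<alpha>" "finite P" "s \<in> P" "min_cost_feasible \<alpha> P s \<rho>" "is_btree P s \<rho> par"
    and parents: "\<forall>y\<in>P - {s}. par y = pred_pt P s y \<or> par y = p"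
    and "x \<in> P" "x \<notin> {s, p}"
  shows "\<rho> x = 0 \<or> \<rho> x = std_range P s x"
proof -
  have child_dist: "\<bar>y - x\<bar> = std_range P s x" if "y \<in> P - {s}" "par y = x" for y
  proof -
    have "pred_pt P s y = x" using parents that assms(8) by force
    then have "is_succ P s x y" using pred_pt_eq_iff_is_succ assms(2,3,7,8) that(1) by blast
    then show ?thesis using std_range_is_succ assms(2,7,8) by simp
  qed
  have "\<rho> x \<le> std_range P s x"
    using child_dist std_range_nonneg by (intro min_cost_range_le[OF assms(1,2,4,5,7)]) auto
  show ?thesis
  proof (cases "\<exists>y\<in>P - {s}. par y = x")
    case True
    then obtain y where "y \<in> P - {s}" "par y = x" by blast
    then have "std_range P s x \<le> \<rho> x"
      using assms(5) child_dist unfolding is_btree_def by force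
    then show ?thesis using \<open>\<rho> x \<le> std_range P s x\<close> by simp
  next
    case False
    then have "\<rho> x \<le> 0" by (intro min_cost_range_le[OF assms(1,2,4,5,7)]) auto
    moreover have "0 \<le> \<rho> x"
      using assms(4,7) by (simp add: min_cost_feasible_def range_assignment_def)
    ultimately show ?thesis by simp
  qed
qed

lemma btree_std_range_le:
  assumes "finite P" "s \<in> P" "is_btree P s \<rho> par"
    and parents: "\<forall>y\<in>P - {s}. par y = pred_pt P s y \<or> par y = p"
    and "p \<in> P" "p \<noteq> s" "0 \<le> \<rho> p"
  shows "std_range P s p \<le> \<rho> p"
proof (cases rule: std_range_cases[OF assms(1,5,6)])
  case (1 y)
  then have "y \<in> P" "y \<noteq> s" by (auto simp: is_succ_def beyond_def)
  then have "pred_pt P s y = p" using pred_pt_eq_iff_is_succ assms(1,2,5,6) 1(1) by blast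
  then have "par y = p" using parents \<open>y \<in> P\<close> \<open>y \<noteq> s\<close> by auto
  then show ?thesis using assms(3) \<open>y \<in> P\<close> \<open>y \<noteq> s\<close> 1(2) unfolding is_btree_def by force
qed (use assms(7) in simp)

lemma structured_opt_ranges:
  assumes "0 < \<alpha>" "finite P" "s \<in> P" "structured_opt \<alpha> P s \<rho>" "\<not> one_sided P s"
  obtains p where "\<forall>x. x \<notin> {s, p} \<longrightarrow> \<rho> x = 0 \<or> \<rho> x = std_range P s x"
    "std_range P s p \<le> \<rho> p"
proof -
  obtain par p where mcf: "min_cost_feasible \<alpha> P s \<rho>" and tree: "is_btree P s \<rho> par"
    and "p \<in> P" and parents: "\<forall>y\<in>P - {s}. par y = pred_pt P s y \<or> par y = p"
    using structured_opt_parents[OF assms(2,4,5)] .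
  have ra: "range_assignment P \<rho>" using mcf by (simp add: min_cost_feasible_def)
  have "\<rho> x = 0 \<or> \<rho> x = std_range P s x" if "x \<notin> {s, p}" for x
  proof (cases "x \<in> P")
    case True
    then show ?thesis using min_cost_range_cases[OF assms(1-3) mcf tree parents _ that] by blast
  next
    case False
    then show ?thesis using ra by (simp add: range_assignment_def)
  qed
  moreover have "std_range P s p \<le> \<rho> p"
  proof (cases "p = s")
    case True
    then show ?thesis using ra \<open>p \<in> P\<close> by (simp add: range_assignment_def std_range_def)
  next
    case False
    then show ?thesis
      using btree_std_range_le[OF assms(2,3) tree parents \<open>p \<in> P\<close>] ra \<open>p \<in> P\<close>
      by (simp add: range_assignment_def)
  qed
  ultimately show ?thesis using that by blast
qed

(* Z and p play the roles of Z_k and p*. *)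
definition almost_standard :: "nat \<Rightarrow> real set \<Rightarrow> real \<Rightarrow> (real \<Rightarrow> real) \<Rightarrow> bool" where
  "almost_standard k P s \<rho> \<longleftrightarrow> (\<exists>Z p. finite Z \<and> card Z \<le> k \<and>
     (\<forall>x. x \<notin> insert s Z \<longrightarrow> std_range P s x \<le> \<rho> x) \<and>
     (\<forall>x. x \<notin> {s, p} \<longrightarrow> \<rho> x \<le> std_range P s x))"

lemma canonical_almost_standard:
  assumes "0 < \<alpha>" "finite P" "s \<in> P" "canonical \<alpha> k P s \<rho>"
  shows "almost_standard k P s \<rho>"
proof -
  obtain \<rho>opt where opt: "structured_opt \<alpha> P s \<rho>opt"
    and canon: "if one_sided P s then \<rho> = \<rho>opt
      else (\<exists>Zk. valid_Zk k P s (zero_pts P s \<rho>opt) Zk \<and>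
              \<rho> = (\<lambda>p. if p \<in> zero_pts P s \<rho>opt - Zk then std_range P s p else \<rho>opt p))"
    using assms(4) unfolding canonical_def by blast
  show ?thesis
  proof (cases "one_sided P s")
    case True
    then have "\<rho> = std_assignment P s" using opt canon by (simp add: structured_opt_def)
    then have "\<forall>x. x \<noteq> s \<longrightarrow> \<rho> x = std_range P s x" by (simp add: std_assignment_def)
    then show ?thesis unfolding almost_standard_def by (intro exI[of _ "{}"] exI[of _ s]) simp
  next
    case False
    let ?Z = "zero_pts P s \<rho>opt"
    obtain Zk where Zk: "valid_Zk k P s ?Z Zk"
      and \<rho>: "\<rho> = (\<lambda>x. if x \<in> ?Z - Zk then std_range P s x else \<rho>opt x)"
      using canon False by auto
    obtain p where off_p: "\<forall>x. x \<notin> {s, p} \<longrightarrow> \<rho>opt x = 0 \<or> \<rho>opt x = std_range P s x"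
      and at_p: "std_range P s p \<le> \<rho>opt p"
      using structured_opt_ranges[OF assms(1-3) opt False] .
    have "finite ?Z" using assms(2) by (simp add: zero_pts_def)
    then have Zk_bound: "finite Zk" "card Zk \<le> k"
      using Zk rev_finite_subset unfolding valid_Zk_def by (auto split: if_splits)
    have std_zero: "std_range P s x = 0" if "x \<noteq> s" "x \<notin> ?Z" "\<rho>opt x = 0" for x
      using that by (auto simp: zero_pts_def std_range_def)
    have "std_range P s x \<le> \<rho> x" if "x \<notin> insert s Zk" for x
      using that off_p at_p std_zero by (cases "x = p") (auto simp: \<rho>)
    moreover have "\<rho> x \<le> std_range P s x" if "x \<notin> {s, p}" for x
      using that off_p std_range_nonneg[of P s x] by (auto simp: \<rho>)
    ultimately show ?thesis using Zk_bound unfolding almost_standard_def by blast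
  qed
qed

lemma card_range_increase_le:
  assumes "almost_standard k P s \<rho>" "almost_standard k' P' s \<rho>'" "finite A"
  shows "card {x \<in> A. \<rho> x < \<rho>' x}
           \<le> k + 2 + card {x \<in> A. std_range P s x < std_range P' s x}"
proof -
  let ?S = "{x \<in> A. std_range P s x < std_range P' s x}"
  obtain Z where "finite Z" "card Z \<le> k" and lower: "\<forall>x. x \<notin> insert s Z \<longrightarrow> std_range P s x \<le> \<rho> x"
    using assms(1) unfolding almost_standard_def by blast
  obtain p' where upper: "\<forall>x. x \<notin> {s, p'} \<longrightarrow> \<rho>' x \<le> std_range P' s x"
    using assms(2) unfolding almost_standard_def by blast
  have "{x \<in> A. \<rho> x < \<rho>' x} \<subseteq> Z \<union> {s, p'} \<union> ?S"
    using lower upper by fastforce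
  then have "card {x \<in> A. \<rho> x < \<rho>' x} \<le> card (Z \<union> {s, p'} \<union> ?S)"
    using \<open>finite Z\<close> assms(3) by (intro card_mono) auto
  also have "\<dots> \<le> card Z + card {s, p'} + card ?S"
    by (meson add_right_mono card_Un_le order_trans)
  also have "\<dots> \<le> k + 2 + card ?S"
    using \<open>card Z \<le> k\<close> card_insert_le_m1[of 2 "{p'}" s] by simp
  finally show ?thesis .
qed

theorem lemma1:
  fixes \<alpha> :: real and k :: nat and P :: "real set" and s q :: real
    and \<rho>old \<rho>new :: "real \<Rightarrow> real"
  assumes "\<alpha> > 1" and "finite P" and "s \<in> P" and "q \<notin> P"
    and "canonical \<alpha> k P s \<rho>old"
    and "canonical \<alpha> k (insert q P) s \<rho>new"
  shows "card {p \<in> insert q P. \<rho>new p > \<rho>old p} \<le> k + 3 \<and>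
         card {p \<in> insert q P. \<rho>new p < \<rho>old p} \<le> k + 3"
proof -
  have "0 < \<alpha>" using assms(1) by simp
  have fin: "finite (insert q P)" using assms(2) by simp
  have old: "almost_standard k P s \<rho>old"
    using canonical_almost_standard[OF \<open>0 < \<alpha>\<close> assms(2,3,5)] .
  have new: "almost_standard k (insert q P) s \<rho>new"
    using canonical_almost_standard[OF \<open>0 < \<alpha>\<close> fin _ assms(6)] assms(3) by simp
  show ?thesis
    using card_range_increase_le[OF old new fin] card_range_increase_le[OF new old fin]
      card_std_range_increase_le_1[OF assms(2-4)] card_std_range_decrease_le_1[OF assms(2-4)]
    by linarith
qed

end
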